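(* Under the positivity assumption, there exists a unique minimal stable variable set of $Y$, denoted $\boldsymbol{D}(Y)$. Moreover, the collection $\mathcal{L}(Y)$ of all stable variable sets of $Y$ under $P^{\text{tr}}$ satisfies $$\mathcal{L}(Y)=\{\boldsymbol{S}\subseteq\boldsymbol{X}\mid \boldsymbol{D}(Y)\subseteq\boldsymbol{S}\}.$$
   Context: $\boldsymbol{X}=(X_1,\dots,X_d)^T\in\mathbb{R}^d$ are features and $Y\in\mathbb{R}$ is an outcome with joint training distribution $P^{\text{tr}}(\boldsymbol{X},Y)$ (given by a density); $\mathcal{X}_j$ is the support of $X_j$, and $\mathbb{E}$ denotes expectation under $P^{\text{tr}}$. Positivity assumption: for all $x_1\in\mathcal{X}_1,\dots,x_d\in\mathcal{X}_d$, $P^{\text{tr}}(X_1=x_1,\dots,X_d=x_d)>0$. A subset $\boldsymbol{S}\subseteq\boldsymbol{X}$ is a stable variable set of $Y$ (under $P^{\text{tr}}$) if $\mathbb{E}[Y\mid\boldsymbol{S}]=\mathbb{E}[Y\mid\boldsymbol{X}]$. A minimal stable variable set is a stable variable set none of whose proper subsets is a stable variable set. *)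

theory Defs
  imports "HOL-Probability.Probability"
begin

text \<open>Features X_0,...,X_(d-1) are random variables X j :: 'a => real on the
probability space M (the training distribution), outcome Y :: 'a => real.
Sets of features are represented by sets of indices S \<subseteq> {..<d}.\<close>

definition feat_sigma :: "'a measure \<Rightarrow> (nat \<Rightarrow> 'a \<Rightarrow> real) \<Rightarrow> nat set \<Rightarrow> 'a measure" where
  "feat_sigma M X S = sigma (space M)
     {X j -` B \<inter> space M | j B. j \<in> S \<and> B \<in> sets borel}"

definition feat_vec :: "nat \<Rightarrow> (nat \<Rightarrow> 'a \<Rightarrow> real) \<Rightarrow> 'a \<Rightarrow> (nat \<Rightarrow> real)" where
  "feat_vec d X \<omega> = restrict (\<lambda>j. X j \<omega>) {..<d}"

definition rv_support :: "'a measure \<Rightarrow> ('a \<Rightarrow> real) \<Rightarrow> real set" where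
  "rv_support M Z = {x. \<forall>e>0. 0 < measure M {\<omega> \<in> space M. Z \<omega> \<in> ball x e}}"

definition stable_set :: "'a measure \<Rightarrow> nat \<Rightarrow> (nat \<Rightarrow> 'a \<Rightarrow> real) \<Rightarrow> ('a \<Rightarrow> real) \<Rightarrow> nat set \<Rightarrow> bool" where
  "stable_set M d X Y S \<longleftrightarrow> S \<subseteq> {..<d} \<and>
     (AE \<omega> in M. real_cond_exp M (feat_sigma M X S) Y \<omega> =
                  real_cond_exp M (feat_sigma M X {..<d}) Y \<omega>)"

definition minimal_stable_set :: "'a measure \<Rightarrow> nat \<Rightarrow> (nat \<Rightarrow> 'a \<Rightarrow> real) \<Rightarrow> ('a \<Rightarrow> real) \<Rightarrow> nat set \<Rightarrow> bool" where
  "minimal_stable_set M d X Y S \<longleftrightarrow> stable_set M d X Y S \<and>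
     (\<forall>T. T \<subset> S \<longrightarrow> \<not> stable_set M d X Y T)"

end

(*
  Stable sets are upward closed by the tower property, and among the finitely many of
  them there is a minimal one; uniqueness and the description of all stable sets follow
  once stable sets are closed under intersection.

  For that, pass to an equivalent probability measure under which the features are
  independent: the new law of the feature vector is a product of truncated normal laws
  on the supports of the X_j, which by positivity has the same null sets as the old law.
  Only null sets and measurability are transported between the two measures.  If
  E[Y | X_S] = E[Y | X_T] a.s., then under the new measure a bounded transform u of
  E[Y | X_S] is X_S-measurable and a.s. equal to an X_T-measurable function; as X_S is
  independent of X_(T - S), E[u | X_T] = E[u | X_(S inter T)].  Hence E[Y | X_S] is a.s.
  X_(S inter T)-measurable, and S inter T is stable by the tower property.
*)
theory Submission
  imports Defs
begin

section \<open>Sigma-algebras generated by features\<close>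

lemma space_feat_sigma [simp]: "space (feat_sigma M X S) = space M"
  unfolding feat_sigma_def by (simp add: space_measure_of_conv)

lemma sets_feat_sigma:
  "sets (feat_sigma M X S) =
     sigma_sets (space M) (\<Union>j\<in>S. {X j -` B \<inter> space M | B. B \<in> sets borel})"
proof -
  have "{X j -` B \<inter> space M | j B. j \<in> S \<and> B \<in> sets borel} =
        (\<Union>j\<in>S. {X j -` B \<inter> space M | B. B \<in> sets borel})"
    by blast
  then show ?thesis
    unfolding feat_sigma_def by (subst sets_measure_of) auto
qed

lemma subalgebra_feat_sigma:
  assumes "\<And>j. j \<in> S \<Longrightarrow> X j \<in> borel_measurable M"
  shows "subalgebra M (feat_sigma M X S)"
  unfolding subalgebra_def sets_feat_sigma
  using assms by (auto intro!: sets.sigma_sets_subset measurable_sets)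

lemma subalgebra_feat_sigma_mono:
  "S \<subseteq> T \<Longrightarrow> subalgebra (feat_sigma M X T) (feat_sigma M X S)"
  unfolding subalgebra_def sets_feat_sigma by (auto intro!: sigma_sets_mono')

lemma feat_sigma_cong_space: "space M' = space M \<Longrightarrow> feat_sigma M' X S = feat_sigma M X S"
  unfolding feat_sigma_def by simp

lemma sets_feat_sigma_Un:
  "sets (feat_sigma M X (A \<union> C)) = sigma_sets (space M)
     {a \<inter> c | a c. a \<in> sets (feat_sigma M X A) \<and> c \<in> sets (feat_sigma M X C)}"
    (is "_ = sigma_sets _ ?G")
proof (rule antisym)
  have "a \<in> sets (feat_sigma M X (A \<union> C))" if "a \<in> sets (feat_sigma M X A)" for a
    using that subalgebra_feat_sigma_mono[of A "A \<union> C" M X] by (auto simp: subalgebra_def)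
  moreover have "c \<in> sets (feat_sigma M X (A \<union> C))" if "c \<in> sets (feat_sigma M X C)" for c
    using that subalgebra_feat_sigma_mono[of C "A \<union> C" M X] by (auto simp: subalgebra_def)
  ultimately have "?G \<subseteq> sets (feat_sigma M X (A \<union> C))"
    by blast
  then show "sigma_sets (space M) ?G \<subseteq> sets (feat_sigma M X (A \<union> C))"
    using sets.sigma_sets_subset[of ?G "feat_sigma M X (A \<union> C)"] by simp
next
  have "X j -` B \<inter> space M \<in> ?G" if j: "j \<in> A \<union> C" and B: "B \<in> sets borel" for j B
  proof -
    let ?b = "X j -` B \<inter> space M"
    have top: "space M \<in> sets (feat_sigma M X A)" "space M \<in> sets (feat_sigma M X C)"
      using sets.top[of "feat_sigma M X A"] sets.top[of "feat_sigma M X C"] by simp_all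
    consider "j \<in> A" | "j \<in> C" using j by blast
    then show ?thesis
    proof cases
      case 1
      then have "?b \<in> sets (feat_sigma M X A)" using B by (auto simp: sets_feat_sigma)
      then show ?thesis using top(2) by (intro CollectI exI[of _ ?b] exI[of _ "space M"]) auto
    next
      case 2
      then have "?b \<in> sets (feat_sigma M X C)" using B by (auto simp: sets_feat_sigma)
      then show ?thesis using top(1) by (intro CollectI exI[of _ "space M"] exI[of _ ?b]) auto
    qed
  qed
  then show "sets (feat_sigma M X (A \<union> C)) \<subseteq> sigma_sets (space M) ?G"
    unfolding sets_feat_sigma[of M X "A \<union> C"] by (intro sigma_sets_mono) auto
qed

lemma (in prob_space) indep_set_feat_sigma:
  assumes indep: "indep_vars (\<lambda>_. lborel) X I"
    and "S \<subseteq> I" "C \<subseteq> I" "S \<inter> C = {}"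
  shows "indep_set (sets (feat_sigma M X S)) (sets (feat_sigma M X C))"
proof -
  define G where "G j = {X j -` B \<inter> space M | B. B \<in> sets (lborel :: real measure)}" for j
  define J where "J b = (if b then S else C)" for b
  have "indep_sets G I"
    using indep unfolding indep_vars_def2 G_def by simp
  then have "indep_sets G (\<Union>b. J b)"
    by (rule indep_sets_mono_index[rotated]) (use assms in \<open>auto simp: J_def\<close>)
  moreover have "Int_stable (G j)" for j
  proof (rule Int_stableI)
    fix a b assume "a \<in> G j" "b \<in> G j"
    then obtain A B where "a = X j -` A \<inter> space M" "b = X j -` B \<inter> space M"
      and "A \<in> sets lborel" "B \<in> sets lborel"
      unfolding G_def by blast
    then show "a \<inter> b \<in> G j"
      unfolding G_def by (intro CollectI exI[of _ "A \<inter> B"]) auto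
  qed
  moreover have "disjoint_family J"
    using assms unfolding disjoint_family_on_def J_def by auto
  ultimately have "indep_sets (\<lambda>b. sigma_sets (space M) (\<Union>j\<in>J b. G j)) UNIV"
    by (intro indep_sets_collect_sigma) auto
  moreover have "(\<lambda>b. sigma_sets (space M) (\<Union>j\<in>J b. G j)) =
      case_bool (sets (feat_sigma M X S)) (sets (feat_sigma M X C))"
    by (simp add: fun_eq_iff J_def G_def sets_feat_sigma split: bool.split)
  ultimately show ?thesis
    unfolding indep_set_def by simp
qed

section \<open>Conditional expectations and independence\<close>

lemma (in prob_space) integral_mult_indep_set:
  fixes f g :: "'a \<Rightarrow> real"
  assumes indep: "indep_set (sets F) (sets G)"
    and F: "subalgebra M F" and G: "subalgebra M G"
    and f: "f \<in> borel_measurable F" "integrable M f"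
    and g: "g \<in> borel_measurable G" "integrable M g"
  shows "(\<integral>x. f x * g x \<partial>M) = (\<integral>x. f x \<partial>M) * (\<integral>x. g x \<partial>M)"
proof -
  have preimages: "sigma_sets (space M) {h -` B \<inter> space M | B. B \<in> sets borel} \<subseteq> sets H"
    if "subalgebra M H" "h \<in> borel_measurable H" for H and h :: "'a \<Rightarrow> real"
  proof -
    have space: "space H = space M"
      using that(1) by (simp add: subalgebra_def)
    have "{h -` B \<inter> space M | B. B \<in> sets borel} \<subseteq> sets H"
      using measurable_sets[OF that(2)] space by auto
    from sets.sigma_sets_subset[OF this] show ?thesis
      unfolding space .
  qed
  have "indep_var borel f borel g"
    unfolding indep_var_eq
  proof
    show "random_variable borel f \<and> random_variable borel g"
      using f(1) g(1) F G by (auto intro: measurable_from_subalg)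
    show "indep_set (sigma_sets (space M) {f -` B \<inter> space M | B. B \<in> sets borel})
                    (sigma_sets (space M) {g -` B \<inter> space M | B. B \<in> sets borel})"
      using indep unfolding indep_set_def
      by (rule indep_sets_mono_sets) (use preimages F G f g in \<open>auto split: bool.split\<close>)
  qed
  then show ?thesis
    using f(2) g(2) by (rule indep_var_lebesgue_integral)
qed

lemma (in prob_space) set_integral_Int_indep:
  fixes f :: "'a \<Rightarrow> real"
  assumes indep: "indep_set (sets F) (sets G)"
    and F: "subalgebra M F" and G: "subalgebra M G"
    and f: "f \<in> borel_measurable F" "integrable M f"
    and a: "a \<in> sets F" and c: "c \<in> sets G"
  shows "(\<integral>x\<in>a \<inter> c. f x \<partial>M) = (\<integral>x\<in>a. f x \<partial>M) * prob c"
proof -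
  have aM: "a \<in> events" and cM: "c \<in> events"
    using a c F G by (auto simp: subalgebra_def)
  have "(\<integral>x\<in>a \<inter> c. f x \<partial>M) = (\<integral>x. (indicator a x * f x) * indicator c x \<partial>M)"
    unfolding set_lebesgue_integral_def
    by (intro Bochner_Integration.integral_cong) (auto split: split_indicator)
  also have "\<dots> = (\<integral>x. indicator a x * f x \<partial>M) * (\<integral>x. indicator c x \<partial>M)"
  proof (rule integral_mult_indep_set[OF indep F G])
    show "integrable M (indicator c :: 'a \<Rightarrow> real)"
      using cM by (intro integrable_real_indicator) (simp_all add: less_top[symmetric])
    show "(\<lambda>x. indicator a x * f x) \<in> borel_measurable F"
      using a f(1) by (intro borel_measurable_times) simp_all
    show "integrable M (\<lambda>x. indicator a x * f x)"
      using integrable_mult_indicator[OF aM f(2)] by simp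
  qed (use c in simp)
  finally show ?thesis
    using cM by (simp add: set_lebesgue_integral_def)
qed

lemma set_integral_Diff_space:
  fixes f :: "'a \<Rightarrow> real"
  assumes A: "A \<in> sets M" and f: "integrable M f"
  shows "(\<integral>x\<in>space M - A. f x \<partial>M) = (\<integral>x. f x \<partial>M) - (\<integral>x\<in>A. f x \<partial>M)"
proof -
  have "(\<integral>x\<in>space M - A. f x \<partial>M) = (\<integral>x. f x - indicator A x * f x \<partial>M)"
    unfolding set_lebesgue_integral_def
    by (intro Bochner_Integration.integral_cong) (auto split: split_indicator)
  also have "\<dots> = (\<integral>x. f x \<partial>M) - (\<integral>x. indicator A x * f x \<partial>M)"
    using integrable_mult_indicator[OF A f] f by (intro Bochner_Integration.integral_diff) simp_all
  finally show ?thesis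
    by (simp add: set_lebesgue_integral_def)
qed

lemma set_integral_eq_sigma_sets:
  fixes f g :: "'a \<Rightarrow> real"
  assumes E: "Int_stable E" "E \<subseteq> sets M"
    and f: "integrable M f" and g: "integrable M g"
    and total: "(\<integral>x. f x \<partial>M) = (\<integral>x. g x \<partial>M)"
    and on_E: "\<And>e. e \<in> E \<Longrightarrow> (\<integral>x\<in>e. f x \<partial>M) = (\<integral>x\<in>e. g x \<partial>M)"
    and U: "U \<in> sigma_sets (space M) E"
  shows "(\<integral>x\<in>U. f x \<partial>M) = (\<integral>x\<in>U. g x \<partial>M)"
proof -
  have E_sets: "sigma_sets (space M) E \<subseteq> sets M"
    using E(2) by (rule sets.sigma_sets_subset)
  from E(1) E(2)[THEN order_trans, OF sets.space_closed] U show ?thesis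
  proof (induction rule: sigma_sets_induct_disjoint)
    case (basic e)
    then show ?case by (rule on_E)
  next
    case empty
    then show ?case by (simp add: set_lebesgue_integral_def)
  next
    case (compl V)
    then show ?case
      using E_sets set_integral_Diff_space[OF _ f] set_integral_Diff_space[OF _ g] total by auto
  next
    case (union V)
    have V: "range V \<subseteq> sets M" "(\<Union>i. V i) \<in> sets M"
      using union(2) E_sets by auto
    have "(\<integral>x\<in>(\<Union>i. V i). h x \<partial>M) = (\<Sum>i. (\<integral>x\<in>V i. h x \<partial>M))" if h: "integrable M h"
      for h :: "'a \<Rightarrow> real"
    proof (rule lebesgue_integral_countable_add)
      show "set_integrable M (\<Union>i. V i) h"
        unfolding set_integrable_def using integrable_mult_indicator[OF V(2) h] by simp
    qed (use union(1) V(1) in \<open>auto simp: disjoint_family_on_def\<close>)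
    then show ?case
      using f g union(3) by simp
  qed
qed

lemma (in prob_space) sigma_finite_subalgebraI:
  "subalgebra M F \<Longrightarrow> sigma_finite_subalgebra M F"
  by (intro finite_measure_subalgebra_is_sigma_finite)
     (simp add: finite_measure_subalgebra_def finite_measure_subalgebra_axioms_def finite_measure_axioms)

lemma Int_stable_Int_sets: "Int_stable {a \<inter> c | a c. a \<in> sets A \<and> c \<in> sets C}"
proof (rule Int_stableI)
  fix e e' assume "e \<in> {a \<inter> c | a c. a \<in> sets A \<and> c \<in> sets C}" "e' \<in> {a \<inter> c | a c. a \<in> sets A \<and> c \<in> sets C}"
  then obtain a c a' c' where "e = a \<inter> c" "e' = a' \<inter> c'"
    and "a \<in> sets A" "a' \<in> sets A" "c \<in> sets C" "c' \<in> sets C"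
    by blast
  then show "e \<inter> e' \<in> {a \<inter> c | a c. a \<in> sets A \<and> c \<in> sets C}"
    by (intro CollectI exI[of _ "a \<inter> a'"] exI[of _ "c \<inter> c'"]) auto
qed

lemma (in prob_space) set_integral_Int_cond_exp_indep:
  fixes u :: "'a \<Rightarrow> real"
  assumes FS: "subalgebra M FS" and FC: "subalgebra M FC" and FA: "subalgebra FS FA"
    and indep: "indep_set (sets FS) (sets FC)"
    and u: "u \<in> borel_measurable FS" "integrable M u"
    and a: "a \<in> sets FA" and c: "c \<in> sets FC"
  shows "(\<integral>x\<in>a \<inter> c. u x \<partial>M) = (\<integral>x\<in>a \<inter> c. real_cond_exp M FA u x \<partial>M)"
proof -
  interpret A: sigma_finite_subalgebra M FA
    using FS FA by (intro sigma_finite_subalgebraI) (auto simp: subalgebra_def)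
  have a_FS: "a \<in> sets FS"
    using a FA by (auto simp: subalgebra_def)
  have k_FS: "real_cond_exp M FA u \<in> borel_measurable FS"
    by (rule measurable_from_subalg[OF FA borel_measurable_cond_exp])
  have "(\<integral>x\<in>a \<inter> c. u x \<partial>M) = (\<integral>x\<in>a. u x \<partial>M) * prob c"
    by (rule set_integral_Int_indep[OF indep FS FC u a_FS c])
  also have "\<dots> = (\<integral>x\<in>a. real_cond_exp M FA u x \<partial>M) * prob c"
    by (simp only: A.real_cond_exp_intA[OF u(2) a])
  also have "\<dots> = (\<integral>x\<in>a \<inter> c. real_cond_exp M FA u x \<partial>M)"
    by (rule set_integral_Int_indep[OF indep FS FC k_FS A.real_cond_exp_int(1)[OF u(2)] a_FS c, symmetric])
  finally show ?thesis .
qed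

lemma (in prob_space) real_cond_exp_indep_join:
  fixes u :: "'a \<Rightarrow> real"
  assumes FS: "subalgebra M FS" and FC: "subalgebra M FC" and FT: "subalgebra M FT"
    and FA: "subalgebra FS FA"
    and indep: "indep_set (sets FS) (sets FC)"
    and join: "sets FT = sigma_sets (space M) {a \<inter> c | a c. a \<in> sets FA \<and> c \<in> sets FC}"
    and u: "u \<in> borel_measurable FS" "integrable M u"
  shows "AE x in M. real_cond_exp M FT u x = real_cond_exp M FA u x"
proof -
  let ?E = "{a \<inter> c | a c. a \<in> sets FA \<and> c \<in> sets FC}"
  let ?k = "real_cond_exp M FA u"
  have FA_M: "subalgebra M FA"
    using FS FA by (auto simp: subalgebra_def)
  interpret T: sigma_finite_subalgebra M FT
    using FT by (rule sigma_finite_subalgebraI)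
  interpret A: sigma_finite_subalgebra M FA
    using FA_M by (rule sigma_finite_subalgebraI)
  have E_sets: "?E \<subseteq> sets M"
    using FA_M FC by (auto simp: subalgebra_def)
  have "a \<in> sets FT" if "a \<in> sets FA" for a
  proof -
    have "a \<inter> space M \<in> ?E"
      using that sets.top[of FC] FC by (auto simp: subalgebra_def)
    then show ?thesis
      using sets.sets_into_space[OF that] FA_M join by (auto simp: subalgebra_def Int_absorb2)
  qed
  then have "subalgebra FT FA"
    using FT FA_M by (auto simp: subalgebra_def)
  then have k_FT: "?k \<in> borel_measurable FT"
    by (rule measurable_from_subalg) simp
  have k_int: "integrable M ?k"
    using u(2) by (rule A.real_cond_exp_int(1))
  show ?thesis
  proof (rule T.real_cond_exp_charact[OF _ u(2) k_int k_FT])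
    fix U assume "U \<in> sets FT"
    then show "(\<integral>x\<in>U. u x \<partial>M) = (\<integral>x\<in>U. ?k x \<partial>M)"
      unfolding join
    proof (rule set_integral_eq_sigma_sets[OF Int_stable_Int_sets E_sets u(2) k_int, rotated -1])
      show "(\<integral>x. u x \<partial>M) = (\<integral>x. ?k x \<partial>M)"
        using A.real_cond_exp_int(2)[OF u(2)] by simp
      fix e assume "e \<in> ?E"
      then show "(\<integral>x\<in>e. u x \<partial>M) = (\<integral>x\<in>e. ?k x \<partial>M)"
        using set_integral_Int_cond_exp_indep[OF FS FC FA indep u] by blast
    qed
  qed
qed

definition squash :: "real \<Rightarrow> real" where
  "squash x = x / (1 + \<bar>x\<bar>)"

definition unsquash :: "real \<Rightarrow> real" where
  "unsquash y = y / (1 - \<bar>y\<bar>)"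

lemma abs_squash: "\<bar>squash x\<bar> = \<bar>x\<bar> / (1 + \<bar>x\<bar>)"
  unfolding squash_def abs_divide by simp

lemma abs_squash_le_1: "\<bar>squash x\<bar> \<le> 1"
  unfolding abs_squash by simp

lemma unsquash_squash [simp]: "unsquash (squash x) = x"
  unfolding unsquash_def abs_squash by (simp add: squash_def field_simps)

lemma borel_measurable_squash [measurable]: "squash \<in> borel_measurable borel"
  unfolding squash_def[abs_def] by measurable

lemma borel_measurable_unsquash [measurable]: "unsquash \<in> borel_measurable borel"
  unfolding unsquash_def[abs_def] by measurable

lemma (in prob_space) AE_eq_measurable_indep_join:
  fixes f g :: "'a \<Rightarrow> real"
  assumes FS: "subalgebra M FS" and FC: "subalgebra M FC" and FT: "subalgebra M FT"
    and FA: "subalgebra FS FA"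
    and indep: "indep_set (sets FS) (sets FC)"
    and join: "sets FT = sigma_sets (space M) {a \<inter> c | a c. a \<in> sets FA \<and> c \<in> sets FC}"
    and f: "f \<in> borel_measurable FS" and g: "g \<in> borel_measurable FT"
    and fg: "AE x in M. f x = g x"
  shows "\<exists>h \<in> borel_measurable FA. AE x in M. f x = h x"
proof -
  interpret T: sigma_finite_subalgebra M FT
    using FT by (rule sigma_finite_subalgebraI)
  \<comment> \<open>Squashing makes f and g bounded, hence integrable, so that conditional expectations apply.\<close>
  define u where "u x = squash (f x)" for x
  define v where "v x = squash (g x)" for x
  have u_FS: "u \<in> borel_measurable FS" and v_FT: "v \<in> borel_measurable FT"
    unfolding u_def v_def using f g by measurable
  then have u_M: "u \<in> borel_measurable M" and v_M: "v \<in> borel_measurable M"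
    using FS FT by (auto intro: measurable_from_subalg)
  have u_int: "integrable M u" and v_int: "integrable M v"
    using u_M v_M by (auto intro!: integrable_const_bound[where B=1] simp: u_def v_def abs_squash_le_1)
  have uv: "AE x in M. u x = v x"
    using fg by eventually_elim (simp add: u_def v_def)
  define k where "k = real_cond_exp M FA u"
  have "AE x in M. real_cond_exp M FT u x = k x"
    unfolding k_def by (rule real_cond_exp_indep_join[OF FS FC FT FA indep join u_FS u_int])
  moreover have "AE x in M. real_cond_exp M FT u x = real_cond_exp M FT v x"
    using uv u_M v_M by (rule T.real_cond_exp_cong)
  moreover have "AE x in M. real_cond_exp M FT v x = v x"
    using v_int v_FT by (rule T.real_cond_exp_F_meas)
  ultimately have "AE x in M. k x = squash (f x)"
    using uv by eventually_elim (simp add: u_def)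
  then have "AE x in M. f x = unsquash (k x)"
    by eventually_elim simp
  moreover have "(\<lambda>x. unsquash (k x)) \<in> borel_measurable FA"
    unfolding k_def by measurable
  ultimately show ?thesis
    by (intro bexI[of _ "\<lambda>x. unsquash (k x)"])
qed

section \<open>Stable variable sets\<close>

lemma stable_set_full: "stable_set M d X Y {..<d}"
  by (simp add: stable_set_def)

lemma stable_set_subset_lessThan: "stable_set M d X Y S \<Longrightarrow> S \<subseteq> {..<d}"
  unfolding stable_set_def by blast

lemma ex_minimal_stable_set: "\<exists>D. minimal_stable_set M d X Y D"
proof -
  let ?L = "{S. stable_set M d X Y S}"
  have "?L \<subseteq> Pow {..<d}"
    unfolding stable_set_def by blast
  then have "finite ?L"
    by (rule finite_subset) simp
  moreover have "?L \<noteq> {}"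
    using stable_set_full by blast
  ultimately have "\<exists>D \<in> ?L. \<forall>S \<in> ?L. S \<subseteq> D \<longrightarrow> D = S"
    by (rule finite_has_minimal)
  then obtain D where "D \<in> ?L" "\<forall>S \<in> ?L. S \<subseteq> D \<longrightarrow> D = S" ..
  then have "minimal_stable_set M d X Y D"
    unfolding minimal_stable_set_def by auto
  then show ?thesis ..
qed

lemma minimal_stable_set_subset:
  assumes Int: "\<And>S T. stable_set M d X Y S \<Longrightarrow> stable_set M d X Y T \<Longrightarrow> stable_set M d X Y (S \<inter> T)"
    and D: "minimal_stable_set M d X Y D" and S: "stable_set M d X Y S"
  shows "D \<subseteq> S"
proof (rule ccontr)
  assume "\<not> D \<subseteq> S"
  then have "S \<inter> D \<subset> D"
    by blast
  moreover have "stable_set M d X Y (S \<inter> D)"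
    using Int S D unfolding minimal_stable_set_def by blast
  ultimately show False
    using D unfolding minimal_stable_set_def by blast
qed

lemma ex1_minimal_stable_set:
  assumes Int: "\<And>S T. stable_set M d X Y S \<Longrightarrow> stable_set M d X Y T \<Longrightarrow> stable_set M d X Y (S \<inter> T)"
  shows "\<exists>!D. minimal_stable_set M d X Y D"
proof (rule ex_ex1I)
  show "\<exists>D. minimal_stable_set M d X Y D"
    by (rule ex_minimal_stable_set)
  fix D D' assume D: "minimal_stable_set M d X Y D" and D': "minimal_stable_set M d X Y D'"
  then have "stable_set M d X Y D" "stable_set M d X Y D'"
    unfolding minimal_stable_set_def by simp_all
  have "D \<subseteq> D'"
    using Int D \<open>stable_set M d X Y D'\<close> by (rule minimal_stable_set_subset)
  moreover have "D' \<subseteq> D"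
    using Int D' \<open>stable_set M d X Y D\<close> by (rule minimal_stable_set_subset)
  ultimately show "D = D'"
    by (rule subset_antisym)
qed

locale feature_model = prob_space M for M :: "'a measure" +
  fixes d :: nat and X :: "nat \<Rightarrow> 'a \<Rightarrow> real" and Y :: "'a \<Rightarrow> real"
  assumes X_measurable: "\<And>j. j < d \<Longrightarrow> X j \<in> borel_measurable M"
    and Y_integrable: "integrable M Y"
begin

lemma subalgebra_features: "S \<subseteq> {..<d} \<Longrightarrow> subalgebra M (feat_sigma M X S)"
  using X_measurable by (intro subalgebra_feat_sigma) auto

lemma stable_set_mono:
  assumes D: "stable_set M d X Y D" and "D \<subseteq> S" "S \<subseteq> {..<d}"
  shows "stable_set M d X Y S"
proof -
  let ?F = "\<lambda>S. feat_sigma M X S"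
  let ?E = "\<lambda>S. real_cond_exp M (?F S) Y"
  interpret S: sigma_finite_subalgebra M "?F S"
    using assms(3) by (intro sigma_finite_subalgebraI subalgebra_features)
  interpret D: sigma_finite_subalgebra M "?F D"
    using assms(2,3) by (intro sigma_finite_subalgebraI subalgebra_features) auto
  have DS: "subalgebra (?F S) (?F D)" and Sfull: "subalgebra (?F {..<d}) (?F S)"
    using assms(2,3) by (auto intro: subalgebra_feat_sigma_mono)
  have D_full: "AE x in M. ?E D x = ?E {..<d} x"
    using D unfolding stable_set_def by blast
  have "AE x in M. real_cond_exp M (?F S) (?E {..<d}) x = ?E S x"
    by (rule S.real_cond_exp_nested_subalg[OF subalgebra_features[OF order_refl] Sfull Y_integrable])
  moreover have "AE x in M. real_cond_exp M (?F S) (?E D) x = real_cond_exp M (?F S) (?E {..<d}) x"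
    by (rule S.real_cond_exp_cong[OF D_full borel_measurable_cond_exp2 borel_measurable_cond_exp2])
  moreover have "AE x in M. real_cond_exp M (?F S) (?E D) x = ?E D x"
    by (rule S.real_cond_exp_F_meas[OF D.real_cond_exp_int(1)[OF Y_integrable]
          measurable_from_subalg[OF DS borel_measurable_cond_exp]])
  ultimately have "AE x in M. ?E S x = ?E {..<d} x"
    using D_full by eventually_elim linarith
  then show ?thesis
    using assms(3) unfolding stable_set_def by blast
qed

lemma stable_set_iff_minimal_subset:
  assumes Int: "\<And>S T. stable_set M d X Y S \<Longrightarrow> stable_set M d X Y T \<Longrightarrow> stable_set M d X Y (S \<inter> T)"
    and D: "minimal_stable_set M d X Y D"
  shows "stable_set M d X Y S \<longleftrightarrow> S \<subseteq> {..<d} \<and> D \<subseteq> S"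
proof
  assume S: "stable_set M d X Y S"
  have "D \<subseteq> S"
    using Int D S by (rule minimal_stable_set_subset)
  with S show "S \<subseteq> {..<d} \<and> D \<subseteq> S"
    using stable_set_subset_lessThan by blast
next
  have "stable_set M d X Y D"
    using D unfolding minimal_stable_set_def by simp
  moreover assume "S \<subseteq> {..<d} \<and> D \<subseteq> S"
  ultimately show "stable_set M d X Y S"
    using stable_set_mono by blast
qed

lemma stable_set_subset_if_cond_exp_measurable:
  assumes S: "stable_set M d X Y S" and "A \<subseteq> S"
    and h: "h \<in> borel_measurable (feat_sigma M X A)"
    and Sh: "AE x in M. real_cond_exp M (feat_sigma M X S) Y x = h x"
  shows "stable_set M d X Y A"
proof -
  let ?F = "\<lambda>S. feat_sigma M X S"
  let ?E = "\<lambda>S. real_cond_exp M (?F S) Y"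
  have Sd: "S \<subseteq> {..<d}" and Ad: "A \<subseteq> {..<d}"
    using S assms(2) by (auto simp: stable_set_def)
  interpret S: sigma_finite_subalgebra M "?F S"
    using Sd by (intro sigma_finite_subalgebraI subalgebra_features)
  interpret A: sigma_finite_subalgebra M "?F A"
    using Ad by (intro sigma_finite_subalgebraI subalgebra_features)
  have AS: "subalgebra (?F S) (?F A)"
    using assms(2) by (rule subalgebra_feat_sigma_mono)
  have h_M: "h \<in> borel_measurable M"
    using A.subalg h by (rule measurable_from_subalg)
  have h_int: "integrable M h"
    using integrable_cong_AE[OF borel_measurable_cond_exp2 h_M Sh] S.real_cond_exp_int(1)[OF Y_integrable]
    by blast
  have "AE x in M. real_cond_exp M (?F A) (?E S) x = ?E A x"
    using S.subalg AS Y_integrable by (rule A.real_cond_exp_nested_subalg)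
  moreover have "AE x in M. real_cond_exp M (?F A) (?E S) x = real_cond_exp M (?F A) h x"
    by (rule A.real_cond_exp_cong[OF Sh borel_measurable_cond_exp2 h_M])
  moreover have "AE x in M. real_cond_exp M (?F A) h x = h x"
    using h_int h by (rule A.real_cond_exp_F_meas)
  moreover have "AE x in M. ?E S x = ?E {..<d} x"
    using S unfolding stable_set_def by blast
  ultimately have "AE x in M. ?E A x = ?E {..<d} x"
    using Sh by eventually_elim linarith
  then show ?thesis
    using Ad unfolding stable_set_def by blast
qed

end

section \<open>Supports of random variables\<close>

lemma not_in_rv_support_iff:
  "x \<notin> rv_support M Z \<longleftrightarrow> (\<exists>e>0. measure M {\<omega> \<in> space M. Z \<omega> \<in> ball x e} = 0)"
  unfolding rv_support_def by (auto simp: not_less measure_le_0_iff)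

lemma (in prob_space) closed_rv_support:
  assumes Z: "Z \<in> borel_measurable M"
  shows "closed (rv_support M Z)"
  unfolding closed_def open_contains_ball
proof
  fix x assume "x \<in> - rv_support M Z"
  then obtain e where e: "e > 0" and null: "prob {\<omega> \<in> space M. Z \<omega> \<in> ball x e} = 0"
    using not_in_rv_support_iff[of x M Z] by auto
  have "y \<notin> rv_support M Z" if y: "y \<in> ball x e" for y
  proof -
    let ?r = "e - dist x y"
    have "ball y ?r \<subseteq> ball x e"
    proof
      fix z assume "z \<in> ball y ?r"
      then show "z \<in> ball x e"
        using dist_triangle[of x z y] by simp
    qed
    then have "prob {\<omega> \<in> space M. Z \<omega> \<in> ball y ?r} \<le> prob {\<omega> \<in> space M. Z \<omega> \<in> ball x e}"
      using Z by (intro finite_measure_mono) auto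
    then show ?thesis
      using y null unfolding not_in_rv_support_iff by (auto simp: measure_le_0_iff intro!: exI[of _ ?r])
  qed
  then show "\<exists>e>0. ball x e \<subseteq> - rv_support M Z"
    using e by blast
qed

lemma (in prob_space) AE_in_rv_support:
  assumes Z: "Z \<in> borel_measurable M"
  shows "AE \<omega> in M. Z \<omega> \<in> rv_support M Z"
proof -
  define B where "B = {ball x e | x e. e > 0 \<and> prob {\<omega> \<in> space M. Z \<omega> \<in> ball x e} = 0}"
  obtain B' where B': "B' \<subseteq> B" "countable B'" "\<Union>B' = \<Union>B"
    using Lindelof[of B] unfolding B_def by auto
  have "Z -` b \<inter> space M \<in> null_sets M" if "b \<in> B" for b
    using that Z unfolding B_def
    by (auto simp: emeasure_eq_measure null_sets_def vimage_def Int_def conj_commute)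
  then have "(\<Union>b\<in>B'. Z -` b \<inter> space M) \<in> null_sets M"
    using B' by (intro null_sets_UN') auto
  moreover have "{\<omega> \<in> space M. Z \<omega> \<notin> rv_support M Z} \<subseteq> (\<Union>b\<in>B'. Z -` b \<inter> space M)"
  proof safe
    fix \<omega> assume "\<omega> \<in> space M" "Z \<omega> \<notin> rv_support M Z"
    then obtain e where "e > 0" "prob {\<omega>' \<in> space M. Z \<omega>' \<in> ball (Z \<omega>) e} = 0"
      unfolding not_in_rv_support_iff by blast
    then have "Z \<omega> \<in> \<Union>B'"
      unfolding B'(3) B_def by force
    then show "\<omega> \<in> (\<Union>b\<in>B'. Z -` b \<inter> space M)"
      using \<open>\<omega> \<in> space M\<close> by blast
  qed
  ultimately show ?thesis
    by (rule AE_I')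
qed

section \<open>An equivalent measure with independent features\<close>

lemma ae_filter_density_eq:
  assumes "f \<in> borel_measurable M" "AE x in M. f x \<noteq> 0"
  shows "ae_filter (density M f) = ae_filter M"
  unfolding filter_eq_iff
proof
  fix P
  show "(AE x in density M f. P x) \<longleftrightarrow> (AE x in M. P x)"
    using assms(2) by (auto simp: AE_density[OF assms(1)] zero_less_iff_neq_zero elim: AE_mp)
qed

lemma (in prob_space) distributed_AE_finite:
  assumes "distributed M N Z p"
  shows "AE x in N. p x \<noteq> \<infinity>"
proof -
  have "(\<integral>\<^sup>+x. p x \<partial>N) = 1"
    using distributed_nn_integral[OF assms, of "\<lambda>_. 1"] by (simp add: emeasure_space_1)
  then show ?thesis
    using assms by (intro nn_integral_PInf_AE) (auto simp: distributed_def)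
qed

lemma (in prob_space) ex_equivalent_measure_distr_density:
  assumes Z: "distributed M N Z p"
    and n: "n \<in> borel_measurable N" "prob_space (density N n)"
    and n_p: "AE x in N. n x \<noteq> 0 \<longrightarrow> p x \<noteq> 0"
    and p_n: "AE x in density N p. n x \<noteq> 0"
  shows "\<exists>M'. prob_space M' \<and> sets M' = sets M \<and> ae_filter M' = ae_filter M \<and>
              distr M' N Z = density N n"
proof -
  have Z_meas: "Z \<in> measurable M N" and p: "p \<in> borel_measurable N"
    and law: "distr M N Z = density N p"
    using Z by (auto simp: distributed_def)
  have p_finite: "AE x in N. p x \<noteq> \<infinity>"
    using Z by (rule distributed_AE_finite)
  define r where "r x = n x / p x" for x
  have r: "r \<in> borel_measurable N"
    unfolding r_def using n(1) p by measurable
  define M' where "M' = density M (\<lambda>\<omega>. r (Z \<omega>))"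
  have "AE x in N. p x * r x = n x"
    using n_p p_finite
    by eventually_elim (auto simp: r_def ennreal_times_divide mult.commute[of "p _"] ennreal_mult_divide_eq)
  then have "density N (\<lambda>x. p x * r x) = density N n"
    using p r n(1) by (intro density_cong) auto
  then have law': "distr M' N Z = density N n"
    unfolding M'_def using p r Z_meas
    by (simp add: density_distr[symmetric] law density_density_eq)
  have "AE x in density N p. p x \<noteq> \<infinity>"
    unfolding AE_density[OF p] using p_finite by eventually_elim simp
  with p_n have "AE x in density N p. r x \<noteq> 0"
    by eventually_elim (simp add: r_def ennreal_divide_eq_0_iff)
  then have "AE \<omega> in M. r (Z \<omega>) \<noteq> 0"
    unfolding law[symmetric] using r Z_meas by (subst (asm) AE_distr_iff) auto
  then have "ae_filter M' = ae_filter M"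
    unfolding M'_def using r Z_meas by (intro ae_filter_density_eq) auto
  moreover have "prob_space M'"
  proof
    have "emeasure M' (space M') = emeasure (distr M' N Z) (space N)"
      using Z_meas measurable_space[OF Z_meas] by (simp add: M'_def emeasure_distr Int_absorb1 subset_eq)
    then show "emeasure M' (space M') = 1"
      using prob_space.emeasure_space_1[OF n(2)] unfolding law' by simp
  qed
  ultimately show ?thesis
    using law' by (auto simp: M'_def)
qed

lemma indicator_PiE_eq_prod:
  "x \<in> extensional I \<Longrightarrow> finite I \<Longrightarrow>
    indicator (Pi\<^sub>E I A) x = (\<Prod>i\<in>I. indicator (A i) (x i) :: ennreal)"
  by (auto simp: indicator_def PiE_iff ennreal_prod_eq_0)

lemma (in product_sigma_finite) density_PiM_prod:
  assumes I: "finite I"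
    and c: "\<And>i. i \<in> I \<Longrightarrow> c i \<in> borel_measurable (M i)"
    and fin: "\<And>i. i \<in> I \<Longrightarrow> sigma_finite_measure (density (M i) (c i))"
  shows "density (PiM I M) (\<lambda>x. \<Prod>i\<in>I. c i (x i)) = PiM I (\<lambda>i. density (M i) (c i))"
proof -
  \<comment> \<open>The factors outside I are irrelevant; c' only makes all of them sigma-finite.\<close>
  define c' where "c' i = (if i \<in> I then c i else (\<lambda>_. 1))" for i
  interpret D: product_sigma_finite "\<lambda>i. density (M i) (c' i)"
    using fin by (auto simp: product_sigma_finite_def c'_def density_1 intro: sigma_finite_measures)
  have c'_meas: "(\<lambda>x. c' i (x i)) \<in> borel_measurable (PiM I M)" if "i \<in> I" for i
    using c[OF that] that by (simp add: c'_def)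
  have "density (PiM I M) (\<lambda>x. \<Prod>i\<in>I. c' i (x i)) = PiM I (\<lambda>i. density (M i) (c' i))"
  proof (rule D.PiM_eqI[OF I])
    show "sets (density (PiM I M) (\<lambda>x. \<Prod>i\<in>I. c' i (x i))) = sets (PiM I (\<lambda>i. density (M i) (c' i)))"
      by (auto intro!: sets_PiM_cong)
  next
    fix A assume A: "\<And>i. i \<in> I \<Longrightarrow> A i \<in> sets (density (M i) (c' i))"
    then have A_PiM: "Pi\<^sub>E I A \<in> sets (PiM I M)"
      by (auto intro!: sets_PiM_I_finite I)
    have "emeasure (density (PiM I M) (\<lambda>x. \<Prod>i\<in>I. c' i (x i))) (Pi\<^sub>E I A) =
          (\<integral>\<^sup>+x. (\<Prod>i\<in>I. c' i (x i) * indicator (A i) (x i)) \<partial>PiM I M)"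
      using A_PiM c'_meas I
      by (subst emeasure_density)
         (auto intro!: nn_integral_cong borel_measurable_prod_ennreal
               simp: indicator_PiE_eq_prod space_PiM PiE_iff prod.distrib simp del: PiE_eq)
    also have "\<dots> = (\<Prod>i\<in>I. \<integral>\<^sup>+y. c' i y * indicator (A i) y \<partial>M i)"
      using A c by (intro product_nn_integral_prod I) (auto simp: c'_def)
    also have "\<dots> = (\<Prod>i\<in>I. emeasure (density (M i) (c' i)) (A i))"
      using A c by (intro prod.cong refl) (auto simp: c'_def emeasure_density)
    finally show "emeasure (density (PiM I M) (\<lambda>x. \<Prod>i\<in>I. c' i (x i))) (Pi\<^sub>E I A) =
        (\<Prod>i\<in>I. emeasure (density (M i) (c' i)) (A i))" .
  qed
  then show ?thesis
    by (simp add: c'_def cong: PiM_cong)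
qed

lemma (in prob_space) indep_vars_if_distr_eq_PiM:
  assumes rv: "\<And>i. i \<in> I \<Longrightarrow> random_variable (N i) (X i)"
    and distr: "distr M (PiM I N) (\<lambda>\<omega>. \<lambda>i\<in>I. X i \<omega>) = PiM I \<mu>"
    and \<mu>: "\<And>i. i \<in> I \<Longrightarrow> prob_space (\<mu> i)" "\<And>i. i \<in> I \<Longrightarrow> sets (\<mu> i) = sets (N i)"
  shows "indep_vars N X I"
proof (cases "I = {}")
  case True
  then show ?thesis
    by (auto simp: indep_vars_def2 indep_sets_def)
next
  case False
  have marginal: "distr M (N i) (X i) = \<mu> i" if i: "i \<in> I" for i
  proof -
    have "distr M (N i) (X i) = distr (distr M (PiM I N) (\<lambda>\<omega>. \<lambda>i\<in>I. X i \<omega>)) (N i) (\<lambda>x. x i)"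
      using rv i by (subst distr_distr) (auto intro!: distr_cong measurable_restrict)
    also have "\<dots> = distr (PiM I \<mu>) (\<mu> i) (\<lambda>x. x i)"
      unfolding distr using \<mu>(2)[OF i] by (intro distr_cong) auto
    also have "\<dots> = \<mu> i"
      using \<mu>(1) i by (rule distr_PiM_component)
    finally show ?thesis .
  qed
  have "PiM I \<mu> = PiM I (\<lambda>i. distr M (N i) (X i))"
    by (rule PiM_cong) (simp_all add: marginal)
  then show ?thesis
    using indep_vars_iff_distr_eq_PiM'[OF False rv] distr by simp
qed

text \<open>Any probability density that vanishes exactly outside C would serve.\<close>

definition truncated_normal_density :: "real set \<Rightarrow> real \<Rightarrow> ennreal" where
  "truncated_normal_density C x =
     ennreal (std_normal_density x) * indicator C x / emeasure std_normal_distribution C"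

lemma borel_measurable_truncated_normal_density [measurable]:
  assumes [measurable]: "C \<in> sets borel"
  shows "truncated_normal_density C \<in> borel_measurable borel"
  unfolding truncated_normal_density_def[abs_def] by measurable

lemma prob_space_std_normal_distribution: "prob_space std_normal_distribution"
  by (rule prob_space_normal_density) simp

lemma std_normal_density_pos: "0 < std_normal_density x"
  by (rule normal_density_pos) simp

lemma emeasure_std_normal_distribution_finite: "emeasure std_normal_distribution C \<noteq> \<infinity>"
  using prob_space.emeasure_le_1[OF prob_space_std_normal_distribution, of C]
  by (auto simp: top_unique)

lemma truncated_normal_density_eq_0_iff: "truncated_normal_density C x = 0 \<longleftrightarrow> x \<notin> C"
  using std_normal_density_pos[of x] emeasure_std_normal_distribution_finite[of C]
  by (simp add: truncated_normal_density_def ennreal_divide_eq_0_iff indicator_def)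

lemma prob_space_truncated_normal_density:
  assumes C: "C \<in> sets borel" "emeasure lborel C \<noteq> 0"
  shows "prob_space (density lborel (truncated_normal_density C))"
proof (rule prob_spaceI)
  have "emeasure std_normal_distribution C \<noteq> 0"
  proof
    assume "emeasure std_normal_distribution C = 0"
    then have "AE x in lborel. x \<in> C \<longrightarrow> ennreal (std_normal_density x) = 0"
      using C(1) null_sets_density_iff[of "\<lambda>y. ennreal (std_normal_density y)" lborel C]
      by (simp add: null_sets_def)
    then have "AE x in lborel. x \<notin> C"
      by eventually_elim (metis std_normal_density_pos ennreal_eq_0_iff not_le)
    then show False
      using C by (simp add: AE_iff_measurable[OF _ refl])
  qed
  moreover have "emeasure (density lborel (truncated_normal_density C)) (space lborel) =
      emeasure std_normal_distribution C / emeasure std_normal_distribution C"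
    using C(1) by (simp add: emeasure_density truncated_normal_density_def nn_integral_divide)
  ultimately show "emeasure (density lborel (truncated_normal_density C))
      (space (density lborel (truncated_normal_density C))) = 1"
    using emeasure_std_normal_distribution_finite[of C] by (simp add: less_top)
qed

context
  fixes I :: "'i set" and C :: "'i \<Rightarrow> real set"
  assumes finite_I: "finite I" and C_borel: "\<And>i. i \<in> I \<Longrightarrow> C i \<in> sets borel"
begin

lemma borel_measurable_prod_truncated_normal_density:
  "(\<lambda>x. \<Prod>i\<in>I. truncated_normal_density (C i) (x i)) \<in> borel_measurable (PiM I (\<lambda>_. lborel))"
proof (rule borel_measurable_prod_ennreal)
  fix i assume i: "i \<in> I"
  have "truncated_normal_density (C i) \<in> borel_measurable lborel"
    using C_borel[OF i] by simp
  with measurable_component_singleton[OF i]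
  show "(\<lambda>x. truncated_normal_density (C i) (x i)) \<in> borel_measurable (PiM I (\<lambda>_. lborel))"
    by (rule measurable_compose)
qed

lemma prod_truncated_normal_density_eq_0_iff:
  assumes "x \<in> space (PiM I (\<lambda>_. lborel))"
  shows "(\<Prod>i\<in>I. truncated_normal_density (C i) (x i)) = 0 \<longleftrightarrow> x \<notin> Pi\<^sub>E I C"
  using assms finite_I by (auto simp: ennreal_prod_eq_0 truncated_normal_density_eq_0_iff space_PiM PiE_iff)

lemma density_prod_truncated_normal_density:
  assumes "\<And>i. i \<in> I \<Longrightarrow> emeasure lborel (C i) \<noteq> 0"
  shows "density (PiM I (\<lambda>_. lborel)) (\<lambda>x. \<Prod>i\<in>I. truncated_normal_density (C i) (x i)) =
    PiM I (\<lambda>i. density lborel (truncated_normal_density (C i)))"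
proof -
  interpret lborels: product_sigma_finite "\<lambda>_. lborel :: real measure"
    by unfold_locales
  show ?thesis
  proof (rule lborels.density_PiM_prod[OF finite_I])
    fix i assume i: "i \<in> I"
    show "truncated_normal_density (C i) \<in> borel_measurable lborel"
      using C_borel[OF i] by simp
    show "sigma_finite_measure (density lborel (truncated_normal_density (C i)))"
      using prob_space_truncated_normal_density[OF C_borel[OF i] assms[OF i]]
      by (rule prob_space_imp_sigma_finite)
  qed
qed

end

lemma (in prob_space) AE_feat_vec_in_rv_supports:
  assumes X: "\<And>j. j < d \<Longrightarrow> X j \<in> borel_measurable M"
  shows "AE \<omega> in M. feat_vec d X \<omega> \<in> (\<Pi>\<^sub>E j\<in>{..<d}. rv_support M (X j))"
proof -
  have "AE \<omega> in M. \<forall>j\<in>{..<d}. X j \<omega> \<in> rv_support M (X j)"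
    using X by (intro eventually_ball_finite ballI AE_in_rv_support) auto
  then show ?thesis
    by eventually_elim (simp add: feat_vec_def)
qed

lemma (in prob_space) PiE_rv_support_in_sets:
  fixes d :: nat
  assumes X: "\<And>j. j < d \<Longrightarrow> X j \<in> borel_measurable M"
  shows "(\<Pi>\<^sub>E j\<in>{..<d}. rv_support M (X j)) \<in> sets (PiM {..<d} (\<lambda>_. lborel))"
  using X by (intro sets_PiM_I_finite) (auto intro: borel_closed closed_rv_support)

lemma (in prob_space) emeasure_rv_support_ne_0:
  assumes X: "\<And>j. j < d \<Longrightarrow> X j \<in> borel_measurable M"
    and p: "distributed M (PiM {..<d} (\<lambda>_. lborel)) (feat_vec d X) p"
    and j: "j < d"
  shows "emeasure lborel (rv_support M (X j)) \<noteq> 0"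
proof
  assume null: "emeasure lborel (rv_support M (X j)) = 0"
  let ?L = "PiM {..<d} (\<lambda>_. lborel :: real measure)"
  let ?K = "\<Pi>\<^sub>E j\<in>{..<d}. rv_support M (X j)"
  interpret lborels: product_sigma_finite "\<lambda>_. lborel :: real measure"
    by unfold_locales
  have K: "?K \<in> sets ?L"
    using X by (rule PiE_rv_support_in_sets)
  have "emeasure ?L ?K = (\<Prod>i<d. emeasure lborel (rv_support M (X i)))"
    using X by (intro lborels.emeasure_PiM) (auto intro: borel_closed closed_rv_support)
  also have "\<dots> = 0"
    using null j by (intro prod_zero) auto
  finally have null_K: "AE x in ?L. x \<notin> ?K"
    using K by (intro AE_I'[of ?K]) auto
  have law: "distr M ?L (feat_vec d X) = density ?L p"
    and p_meas: "p \<in> borel_measurable ?L" and Xvec: "feat_vec d X \<in> measurable M ?L"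
    using p by (auto simp: distributed_def)
  have "AE x in distr M ?L (feat_vec d X). x \<notin> ?K"
    using null_K unfolding law AE_density[OF p_meas] by eventually_elim simp
  then have "AE \<omega> in M. feat_vec d X \<omega> \<notin> ?K"
    using Xvec K by (subst (asm) AE_distr_iff) auto
  moreover have "AE \<omega> in M. feat_vec d X \<omega> \<in> ?K"
    using X by (rule AE_feat_vec_in_rv_supports)
  ultimately show False
    by (auto dest: AE_contr)
qed

lemma (in prob_space) AE_law_feat_vec_in_rv_supports:
  fixes d :: nat
  assumes X: "\<And>j. j < d \<Longrightarrow> X j \<in> borel_measurable M"
    and p: "distributed M (PiM {..<d} (\<lambda>_. lborel)) (feat_vec d X) p"
  shows "AE x in density (PiM {..<d} (\<lambda>_. lborel)) p. x \<in> (\<Pi>\<^sub>E j\<in>{..<d}. rv_support M (X j))"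
proof -
  let ?L = "PiM {..<d} (\<lambda>_. lborel :: real measure)"
  let ?K = "\<Pi>\<^sub>E j\<in>{..<d}. rv_support M (X j)"
  have Xvec: "feat_vec d X \<in> measurable M ?L" and law: "distr M ?L (feat_vec d X) = density ?L p"
    using p by (auto simp: distributed_def)
  have K: "?K \<in> sets ?L"
    using X by (rule PiE_rv_support_in_sets)
  then have "{x \<in> space ?L. x \<in> ?K} = ?K"
    using sets.sets_into_space by blast
  with K have "{x \<in> space ?L. x \<in> ?K} \<in> sets ?L"
    by simp
  moreover have "AE \<omega> in M. feat_vec d X \<omega> \<in> ?K"
    using X by (rule AE_feat_vec_in_rv_supports)
  ultimately show ?thesis
    unfolding law[symmetric] by (simp add: AE_distr_iff[OF Xvec])
qed

lemma (in prob_space) ex_equivalent_measure_indep_features: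
  assumes X: "\<And>j. j < d \<Longrightarrow> X j \<in> borel_measurable M"
    and p: "distributed M (PiM {..<d} (\<lambda>_. lborel)) (feat_vec d X) p"
    and positivity: "\<forall>x \<in> (\<Pi>\<^sub>E j\<in>{..<d}. rv_support M (X j)). p x > 0"
  shows "\<exists>M'. prob_space M' \<and> sets M' = sets M \<and> ae_filter M' = ae_filter M \<and>
              prob_space.indep_vars M' (\<lambda>_. lborel) X {..<d}"
proof -
  let ?L = "PiM {..<d} (\<lambda>_. lborel :: real measure)"
  let ?K = "\<Pi>\<^sub>E j\<in>{..<d}. rv_support M (X j)"
  let ?C = "\<lambda>j. rv_support M (X j)"
  let ?\<mu> = "\<lambda>j. density lborel (truncated_normal_density (?C j))"
  define n where "n x = (\<Prod>j<d. truncated_normal_density (?C j) (x j))" for x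
  have C: "?C j \<in> sets borel" and C_pos: "emeasure lborel (?C j) \<noteq> 0" if "j \<in> {..<d}" for j
    using that closed_rv_support[OF X] emeasure_rv_support_ne_0[OF X p] by (auto intro: borel_closed)
  have n: "n \<in> borel_measurable ?L"
    unfolding n_def using borel_measurable_prod_truncated_normal_density[of "{..<d}" ?C] C by simp
  have n_nonzero: "n x \<noteq> 0 \<longleftrightarrow> x \<in> ?K" if "x \<in> space ?L" for x
    unfolding n_def using prod_truncated_normal_density_eq_0_iff[of "{..<d}" ?C] C that by simp
  have n_PiM: "density ?L n = PiM {..<d} ?\<mu>"
    unfolding n_def using density_prod_truncated_normal_density[of "{..<d}" ?C] C C_pos by simp
  have \<mu>: "prob_space (?\<mu> j)" if "j \<in> {..<d}" for j
    using C[OF that] C_pos[OF that] by (rule prob_space_truncated_normal_density)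
  have K: "AE x in density ?L p. x \<in> ?K"
    using X p by (rule AE_law_feat_vec_in_rv_supports)
  have "AE x in ?L. n x \<noteq> 0 \<longrightarrow> p x \<noteq> 0"
    using positivity n_nonzero by (intro AE_I2 impI) (metis less_irrefl)
  moreover from K have "AE x in density ?L p. n x \<noteq> 0"
    by (rule AE_mp) (intro AE_I2 impI, simp add: n_nonzero)
  moreover have "prob_space (density ?L n)"
    unfolding n_PiM using \<mu> by (rule prob_space_PiM)
  ultimately obtain M' where M': "prob_space M'" "sets M' = sets M" "ae_filter M' = ae_filter M"
    and law': "distr M' ?L (feat_vec d X) = density ?L n"
    using ex_equivalent_measure_distr_density[OF p n] by blast
  have "prob_space.indep_vars M' (\<lambda>_. lborel) X {..<d}"
  proof (rule prob_space.indep_vars_if_distr_eq_PiM[OF M'(1)])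
    show "X j \<in> measurable M' lborel" if "j \<in> {..<d}" for j
      using X that by (simp add: measurable_cong_sets[OF M'(2) refl])
    show "distr M' ?L (\<lambda>\<omega>. \<lambda>j\<in>{..<d}. X j \<omega>) = PiM {..<d} ?\<mu>"
      using law' n_PiM by (simp add: feat_vec_def[abs_def])
  qed (use \<mu> in auto)
  then show ?thesis
    using M' by blast
qed

section \<open>Intersections of stable sets\<close>

context feature_model
begin

lemma stable_set_Int:
  assumes p: "distributed M (PiM {..<d} (\<lambda>_. lborel)) (feat_vec d X) p"
    and positivity: "\<forall>x \<in> (\<Pi>\<^sub>E j\<in>{..<d}. rv_support M (X j)). p x > 0"
    and S: "stable_set M d X Y S" and T: "stable_set M d X Y T"
  shows "stable_set M d X Y (S \<inter> T)"
proof -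
  let ?F = "\<lambda>S. feat_sigma M X S"
  let ?E = "\<lambda>S. real_cond_exp M (?F S) Y"
  have Sd: "S \<subseteq> {..<d}" and Td: "T \<subseteq> {..<d}"
    using S T by (auto simp: stable_set_def)
  obtain M' where M': "prob_space M'" "sets M' = sets M" and ae: "ae_filter M' = ae_filter M"
    and indep: "prob_space.indep_vars M' (\<lambda>_. lborel) X {..<d}"
    using ex_equivalent_measure_indep_features[OF X_measurable p positivity] by blast
  interpret M': prob_space M'
    by (fact M'(1))
  have space: "space M' = space M"
    using M'(2) by (rule sets_eq_imp_space_eq)
  have sub: "subalgebra M' (?F U)" if "U \<subseteq> {..<d}" for U
    using subalgebra_features[OF that] M'(2) space by (simp add: subalgebra_def)
  have TS: "T - S \<subseteq> {..<d}"
    using Td by blast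
  then have indep_SC: "M'.indep_set (sets (?F S)) (sets (?F (T - S)))"
    using M'.indep_set_feat_sigma[OF indep Sd] by (simp add: feat_sigma_cong_space[OF space])
  have join: "sets (?F T) =
      sigma_sets (space M') {a \<inter> c | a c. a \<in> sets (?F (S \<inter> T)) \<and> c \<in> sets (?F (T - S))}"
  proof -
    have "S \<inter> T \<union> (T - S) = T"
      by blast
    then show ?thesis
      using sets_feat_sigma_Un[of M X "S \<inter> T" "T - S"] by (simp only: space)
  qed
  have "AE x in M'. ?E S x = ?E T x"
    using S T unfolding ae stable_set_def by auto
  then obtain h where h: "h \<in> borel_measurable (?F (S \<inter> T))" "AE x in M'. ?E S x = h x"
    using M'.AE_eq_measurable_indep_join[OF sub[OF Sd] sub[OF TS] sub[OF Td]
        subalgebra_feat_sigma_mono[OF Int_lower1] indep_SC join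
        borel_measurable_cond_exp borel_measurable_cond_exp]
    by blast
  show ?thesis
    using h unfolding ae by (intro stable_set_subset_if_cond_exp_measurable[OF S]) auto
qed

end

theorem theorem4:
  fixes M :: "'a measure" and d :: nat
    and X :: "nat \<Rightarrow> 'a \<Rightarrow> real" and Y :: "'a \<Rightarrow> real"
    and q :: "(nat \<Rightarrow> real) \<times> real \<Rightarrow> ennreal"
    and p :: "(nat \<Rightarrow> real) \<Rightarrow> ennreal"
  assumes "prob_space M"
    and "\<And>j. j < d \<Longrightarrow> X j \<in> borel_measurable M"
    and "Y \<in> borel_measurable M"
    and "integrable M Y"
    and joint_density: "distributed M (PiM {..<d} (\<lambda>_. lborel) \<Otimes>\<^sub>M lborel)
                          (\<lambda>\<omega>. (feat_vec d X \<omega>, Y \<omega>)) q"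
    and X_density: "distributed M (PiM {..<d} (\<lambda>_. lborel)) (feat_vec d X) p"
    and positivity: "\<forall>x \<in> (\<Pi>\<^sub>E j\<in>{..<d}. rv_support M (X j)). p x > 0"
  shows "(\<exists>!D. minimal_stable_set M d X Y D) \<and>
         (\<forall>D. minimal_stable_set M d X Y D \<longrightarrow>
             {S. stable_set M d X Y S} = {S. S \<subseteq> {..<d} \<and> D \<subseteq> S})"
proof -
  interpret feature_model M d X Y
    using assms(1,2,4) by (simp add: feature_model_def feature_model_axioms_def)
  have Int: "stable_set M d X Y (S \<inter> T)"
    if "stable_set M d X Y S" "stable_set M d X Y T" for S T
    using X_density positivity that by (rule stable_set_Int)
  show ?thesis
  proof (intro conjI allI impI)
    show "\<exists>!D. minimal_stable_set M d X Y D"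
      using Int by (rule ex1_minimal_stable_set)
    show "{S. stable_set M d X Y S} = {S. S \<subseteq> {..<d} \<and> D \<subseteq> S}"
      if "minimal_stable_set M d X Y D" for D
    proof -
      have "stable_set M d X Y S \<longleftrightarrow> S \<subseteq> {..<d} \<and> D \<subseteq> S" for S
        using Int that by (rule stable_set_iff_minimal_subset)
      then show ?thesis
        by blast
    qed
  qed
qed

end
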